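(* Let $g$ be a nondegenerate symmetric bilinear form on $\mathbb{R}^n$, $R:[0,1]\to\mathcal L(\mathbb{R}^n)$ a $C^1$ map of $g$-symmetric operators, $P\subset\mathbb{R}^n$ a subspace on which $g$ is nondegenerate and $S:P\to P$ $g$-symmetric. Then for every $t\in]0,1]$ the isomorphism $\psi_t\circ\varphi_t:\mathcal N_t\to\mathbb J[t]^\perp$ carries the restriction of $\hat I'(t)$ to $\mathcal N_t$ into the restriction of $-g$ to $\mathbb J[t]^\perp$; that is, for all $\hat V,\hat W\in\mathcal N_t$, $$\frac{d}{dt}\hat I_t(\hat V,\hat W)=-g\big((\varphi_t\hat V)'(t),(\varphi_t\hat W)'(t)\big).$$
   Context: $g$-symmetric: $g(Tx,y)=g(x,Ty)$; $\perp$ is $g$-orthogonality. $\mathbb J$ is the space of solutions of $J''=R(t)J$ on $[0,1]$ with $J(0)\in P$, $J'(0)+S[J(0)]\in P^\perp$; $\mathbb J[t]=\{J(t):J\in\mathbb J\}$. For $t\in]0,1]$: $\mathcal H_t=\{V\in H^1([0,t],\mathbb{R}^n):V(0)\in P,V(t)=0\}$, $\mathcal H=\mathcal H_1$, $I_t(V,W)=\int_0^t[g(V',W')+g(R(s)V,W)]ds-g(S[V(0)],W(0))$, $\varphi_t:\mathcal H\to\mathcal H_t$, $\varphi_t(\hat V)(s)=\hat V(s/t)$, $\hat I_t=I_t(\varphi_t\cdot,\varphi_t\cdot)$ on $\mathcal H$ (a $C^1$ curve $t\mapsto\hat I_t$ of bounded symmetric bilinear forms on $\mathcal H$, with derivative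 $\hat I'(t)$), $\mathcal N_t=\mathrm{Ker}(\hat I_t)$. The kernel of $I_t$ consists of the restrictions to $[0,t]$ of $J\in\mathbb J$ with $J(t)=0$, and $\psi_t:\mathrm{Ker}(I_t)\to\mathbb J[t]^\perp$, $\psi_t(V)=V'(t)$, is an isomorphism. *)

theory Defs
  imports "HOL-Analysis.Analysis"
begin

definition H1 :: "real \<Rightarrow> real \<Rightarrow> (real \<Rightarrow> 'a::euclidean_space) \<Rightarrow> bool" where
  "H1 a b V \<longleftrightarrow> (\<exists>V'. (\<forall>s\<in>{a..b}. (V' has_integral (V s - V a)) {a..s})
                     \<and> (\<lambda>s. (norm (V' s))\<^sup>2) integrable_on {a..b})"

text \<open>A (choice of) weak derivative of an H^1 function on [a,b]; unique up to null sets.\<close>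
definition H1deriv :: "real \<Rightarrow> real \<Rightarrow> (real \<Rightarrow> 'a::euclidean_space) \<Rightarrow> real \<Rightarrow> 'a" where
  "H1deriv a b V = (SOME V'. (\<forall>s\<in>{a..b}. (V' has_integral (V s - V a)) {a..s})
                     \<and> (\<lambda>s. (norm (V' s))\<^sup>2) integrable_on {a..b})"

definition Hsp :: "(real^'n) set \<Rightarrow> real \<Rightarrow> (real \<Rightarrow> real^'n) set" where
  "Hsp P t = {V. H1 0 t V \<and> V 0 \<in> P \<and> V t = 0}"

definition Iform :: "(real^'n \<Rightarrow> real^'n \<Rightarrow> real) \<Rightarrow> (real \<Rightarrow> real^'n^'n)
    \<Rightarrow> (real^'n \<Rightarrow> real^'n) \<Rightarrow> real \<Rightarrow> (real \<Rightarrow> real^'n) \<Rightarrow> (real \<Rightarrow> real^'n) \<Rightarrow> real" where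
  "Iform g R S t V W =
     integral {0..t} (\<lambda>s. g (H1deriv 0 t V s) (H1deriv 0 t W s) + g (R s *v V s) (W s))
     - g (S (V 0)) (W 0)"

definition phi :: "real \<Rightarrow> (real \<Rightarrow> 'a) \<Rightarrow> real \<Rightarrow> 'a" where
  "phi t V = (\<lambda>s. V (s / t))"

definition Ihat :: "(real^'n \<Rightarrow> real^'n \<Rightarrow> real) \<Rightarrow> (real \<Rightarrow> real^'n^'n)
    \<Rightarrow> (real^'n \<Rightarrow> real^'n) \<Rightarrow> real \<Rightarrow> (real \<Rightarrow> real^'n) \<Rightarrow> (real \<Rightarrow> real^'n) \<Rightarrow> real" where
  "Ihat g R S t V W = Iform g R S t (phi t V) (phi t W)"

definition Nker :: "(real^'n \<Rightarrow> real^'n \<Rightarrow> real) \<Rightarrow> (real \<Rightarrow> real^'n^'n)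
    \<Rightarrow> (real^'n) set \<Rightarrow> (real^'n \<Rightarrow> real^'n) \<Rightarrow> real \<Rightarrow> (real \<Rightarrow> real^'n) set" where
  "Nker g R P S t = {V \<in> Hsp P 1. \<forall>W \<in> Hsp P 1. Ihat g R S t V W = 0}"

end

theory Submission
  imports Defs
begin

text \<open>Substituting \<open>s = t u\<close> turns \<open>Ihat t V W\<close> into
  \<open>\<integral>\<^sub>0\<^sup>1 g(V',W')/t + t g(R(t u) V, W) du - g(S V(0), W(0))\<close>, an integral over a fixed
  interval that can be differentiated in \<open>t\<close> under the integral sign.
  Testing the kernel condition against the tent fields \<open>u \<mapsto> (min u a - a u) y\<close> and
  integrating by parts gives, by a du Bois-Reymond argument, that every \<open>V \<in> N\<^sub>t\<close> is a
  \<open>C\<^sup>2\<close> solution of \<open>V'' = t\<^sup>2 R(t u) V\<close>. For two such solutions the \<open>t\<close>-derivative of the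
  integrand is an exact \<open>u\<close>-derivative, so the derivative of \<open>Ihat\<close> is a boundary term:
  \<open>-g(V'(1), W'(1))/t\<^sup>2 = -g((phi t V)'(t), (phi t W)'(t))\<close>, as \<open>W(1) = 0\<close>.\<close>

section \<open>Functions whose indefinite integral vanishes\<close>

lemma integrable_indicator_Ioi_mult:
  fixes f :: "real \<Rightarrow> real"
  assumes "integrable lborel f"
  shows "integrable lborel (\<lambda>y. indicator {x<..} y * f y)"
  using integrable_real_mult_indicator[OF _ assms, of "{x<..}"] by (simp add: mult.commute)

lemma emeasure_density_Ioi:
  fixes f :: "real \<Rightarrow> real"
  assumes f: "integrable lborel f" and f_nonneg: "\<And>y. 0 \<le> f y"
  shows "emeasure (density lborel (\<lambda>y. ennreal (f y))) {x<..}
    = ennreal (LINT y|lborel. indicator {x<..} y * f y)"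
proof -
  have "emeasure (density lborel (\<lambda>y. ennreal (f y))) {x<..}
      = (\<integral>\<^sup>+y. ennreal (f y) * indicator {x<..} y \<partial>lborel)"
    using f by (simp add: emeasure_density)
  also have "\<dots> = (\<integral>\<^sup>+y. ennreal (indicator {x<..} y * f y) \<partial>lborel)"
    by (intro nn_integral_cong) (simp add: indicator_def)
  also have "\<dots> = ennreal (LINT y|lborel. indicator {x<..} y * f y)"
    using integrable_indicator_Ioi_mult[OF f] f_nonneg by (intro nn_integral_eq_integral) auto
  finally show ?thesis .
qed

lemma AE_lborel_eq_0_if_integrals_Ioi_eq_0:
  fixes g :: "real \<Rightarrow> real"
  assumes gi: "integrable lborel g"
    and int0: "\<And>x. (LINT y|lborel. indicator {x<..} y * g y) = 0"
  shows "AE x in lborel. g x = 0"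
proof -
  let ?pos = "\<lambda>y. max 0 (g y)" and ?neg = "\<lambda>y. max 0 (- g y)"
  have gpi: "integrable lborel ?pos" and gmi: "integrable lborel ?neg"
    using gi by auto
  have "density lborel (\<lambda>y. ennreal (?pos y)) = density lborel (\<lambda>y. ennreal (?neg y))"
  proof (rule measure_eqI_lessThan)
    fix x
    have pos: "emeasure (density lborel (\<lambda>y. ennreal (?pos y))) {x<..}
        = ennreal (LINT y|lborel. indicator {x<..} y * ?pos y)"
      by (rule emeasure_density_Ioi[OF gpi]) simp
    have neg: "emeasure (density lborel (\<lambda>y. ennreal (?neg y))) {x<..}
        = ennreal (LINT y|lborel. indicator {x<..} y * ?neg y)"
      by (rule emeasure_density_Ioi[OF gmi]) simp
    show "emeasure (density lborel (\<lambda>y. ennreal (?pos y))) {x<..} < \<infinity>"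
      unfolding pos infinity_ennreal_def by (rule ennreal_less_top)
    have "(LINT y|lborel. indicator {x<..} y * ?pos y) - (LINT y|lborel. indicator {x<..} y * ?neg y)
        = (LINT y|lborel. indicator {x<..} y * ?pos y - indicator {x<..} y * ?neg y)"
      by (rule Bochner_Integration.integral_diff[OF integrable_indicator_Ioi_mult[OF gpi]
          integrable_indicator_Ioi_mult[OF gmi], symmetric])
    also have "\<dots> = (LINT y|lborel. indicator {x<..} y * g y)"
      by (rule Bochner_Integration.integral_cong) (auto simp: max_def indicator_def)
    finally have "(LINT y|lborel. indicator {x<..} y * ?pos y) = (LINT y|lborel. indicator {x<..} y * ?neg y)"
      using int0[of x] by linarith
    then show "emeasure (density lborel (\<lambda>y. ennreal (?pos y))) {x<..}
        = emeasure (density lborel (\<lambda>y. ennreal (?neg y))) {x<..}"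
      unfolding pos neg by (rule arg_cong)
  qed simp_all
  then have "AE x in lborel. ennreal (?pos x) = ennreal (?neg x)"
    using gi by (subst (asm) sigma_finite_measure.density_unique_iff[OF sigma_finite_lborel]) auto
  then show ?thesis
    by eventually_elim (auto simp: max_def split: if_splits)
qed

lemma AE_lebesgue_eq_0_if_integrals_Ioi_eq_0:
  fixes h :: "real \<Rightarrow> real"
  assumes hi: "integrable lebesgue h"
    and int0: "\<And>x. (LINT y|lebesgue. indicator {x<..} y * h y) = 0"
  shows "AE x in lebesgue. h x = 0"
proof -
  obtain g where gb: "g \<in> borel_measurable lborel" and hg: "AE x in lborel. h x = g x"
    using hi completion_ex_borel_measurable_real by blast
  have hg': "AE x in lebesgue. h x = g x" using hg by (rule AE_completion)
  have hm: "h \<in> borel_measurable lebesgue" using hi by simp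
  have "integrable lebesgue g"
    using hi measurable_completion[OF gb] hg' by (rule integrable_cong_AE_imp)
  then have gi: "integrable lborel g" using gb by (simp add: integrable_completion)
  have "AE x in lborel. g x = 0"
  proof (rule AE_lborel_eq_0_if_integrals_Ioi_eq_0[OF gi])
    fix x
    have mg: "(\<lambda>y. indicator {x<..} y * g y) \<in> borel_measurable lborel"
      using gb by measurable
    have "(LINT y|lborel. indicator {x<..} y * g y) = (LINT y|lebesgue. indicator {x<..} y * g y)"
      using integral_completion[OF mg] by simp
    also have "\<dots> = (LINT y|lebesgue. indicator {x<..} y * h y)"
    proof (rule integral_cong_AE)
      have "indicator {x<..} \<in> borel_measurable lebesgue"
        by (intro measurable_completion borel_measurable_indicator) auto
      then show "(\<lambda>y. indicator {x<..} y * h y) \<in> borel_measurable lebesgue"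
        using hm by (rule borel_measurable_times)
    qed (use hg' measurable_completion[OF mg] in auto)
    finally show "(LINT y|lborel. indicator {x<..} y * g y) = 0" using int0 by simp
  qed
  then show ?thesis using hg' by (auto dest: AE_completion)
qed

lemma negligible_nonzero_if_integrals_from_left_eq_0:
  fixes f :: "real \<Rightarrow> real"
  assumes fi: "f absolutely_integrable_on {a..b}"
    and int0: "\<And>s. s \<in> {a..b} \<Longrightarrow> integral {a..s} f = 0"
  shows "negligible {x\<in>{a..b}. f x \<noteq> 0}"
proof -
  define h where "h x = indicator {a..b} x * f x" for x
  have f_ai: "f absolutely_integrable_on {a..c}" if "c \<le> b" for c
    using fi by (rule set_integrable_subset) (use that in auto)
  have set_int0: "(LINT y|lebesgue. indicator {a..c} y * f y) = 0" if "c \<le> b" for c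
  proof (cases "a \<le> c")
    case True
    then show ?thesis
      using set_lebesgue_integral_eq_integral(2)[OF f_ai[OF that]] int0[of c] that
      by (simp add: set_lebesgue_integral_def)
  qed simp
  have "AE x in lebesgue. h x = 0"
  proof (rule AE_lebesgue_eq_0_if_integrals_Ioi_eq_0)
    show "integrable lebesgue h" using fi unfolding h_def set_integrable_def by simp
    fix x
    have "(\<lambda>y. indicator {x<..} y * h y)
        = (\<lambda>y. indicator {a..b} y * f y - indicator {a..min x b} y * f y)"
      by (auto simp: h_def indicator_def fun_eq_iff)
    then show "(LINT y|lebesgue. indicator {x<..} y * h y) = 0"
      using set_int0[of b] set_int0[of "min x b"] f_ai[of b] f_ai[of "min x b"]
      by (simp add: set_integrable_def)
  qed
  then obtain N where N: "{x \<in> space lebesgue. h x \<noteq> 0} \<subseteq> N" "N \<in> null_sets lebesgue"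
    by (rule AE_E) blast
  have "{x\<in>{a..b}. f x \<noteq> 0} \<subseteq> N" using N(1) by (auto simp: h_def)
  moreover have "negligible N" using N(2) by (simp add: negligible_iff_null_sets)
  ultimately show ?thesis by (rule negligible_subset[rotated])
qed

lemma negligible_nonzero_if_integrals_from_left_eq_0_euclidean:
  fixes f :: "real \<Rightarrow> 'a::euclidean_space"
  assumes fi: "f absolutely_integrable_on {a..b}"
    and int0: "\<And>s. s \<in> {a..b} \<Longrightarrow> (f has_integral 0) {a..s}"
  shows "negligible {x\<in>{a..b}. f x \<noteq> 0}"
proof -
  have "negligible {x\<in>{a..b}. f x \<bullet> i \<noteq> 0}" if "i \<in> Basis" for i
  proof (rule negligible_nonzero_if_integrals_from_left_eq_0)
    show "(\<lambda>x. f x \<bullet> i) absolutely_integrable_on {a..b}"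
      using fi by (rule absolutely_integrable_component)
    show "integral {a..s} (\<lambda>x. f x \<bullet> i) = 0" if "s \<in> {a..b}" for s
      using int0[OF that] integral_component_eq[of f "{a..s}" i]
      by (simp add: has_integral_integrable integral_unique)
  qed
  then have "negligible (\<Union>i\<in>Basis. {x\<in>{a..b}. f x \<bullet> i \<noteq> 0})"
    by (intro negligible_Union) auto
  moreover have "{x\<in>{a..b}. f x \<noteq> 0} \<subseteq> (\<Union>i\<in>Basis. {x\<in>{a..b}. f x \<bullet> i \<noteq> 0})"
    using euclidean_eq_iff[where 'a='a] by auto
  ultimately show ?thesis by (rule negligible_subset)
qed

section \<open>Weak derivatives\<close>

definition has_H1_derivative :: "(real \<Rightarrow> 'a::euclidean_space) \<Rightarrow> (real \<Rightarrow> 'a) \<Rightarrow> real \<Rightarrow> bool" where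
  "has_H1_derivative V D T \<longleftrightarrow>
     (\<forall>s\<in>{0..T}. (D has_integral (V s - V 0)) {0..s}) \<and> (\<lambda>s. (norm (D s))\<^sup>2) integrable_on {0..T}"

lemma H1_iff_has_H1_derivative: "H1 0 T V \<longleftrightarrow> (\<exists>D. has_H1_derivative V D T)"
  by (simp add: H1_def has_H1_derivative_def)

lemma has_H1_derivative_H1deriv:
  assumes "has_H1_derivative V D T"
  shows "has_H1_derivative V (H1deriv 0 T V) T"
proof -
  have "\<exists>D. has_H1_derivative V D T" using assms by blast
  then show ?thesis unfolding H1deriv_def has_H1_derivative_def by (rule someI_ex)
qed

lemma has_H1_derivative_integrable_on:
  assumes "has_H1_derivative V D T" "s \<in> {0..T}"
  shows "D integrable_on {0..s}"
  using assms by (auto simp: has_H1_derivative_def)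

lemma has_H1_derivative_eq_integral:
  assumes "has_H1_derivative V D T" "s \<in> {0..T}"
  shows "V s = V 0 + integral {0..s} D"
proof -
  have "(D has_integral V s - V 0) {0..s}" using assms by (auto simp: has_H1_derivative_def)
  then show ?thesis by (simp add: integral_unique)
qed

lemma has_H1_derivative_continuous_on:
  assumes "has_H1_derivative V D T"
  shows "continuous_on {0..T} V"
proof (cases "0 \<le> T")
  case True
  have "continuous_on {0..T} (\<lambda>s. V 0 + integral {0..s} D)"
    using has_H1_derivative_integrable_on[OF assms, of T] True
    by (intro continuous_on_add continuous_on_const indefinite_integral_continuous_1) auto
  then show ?thesis
    by (rule continuous_on_eq) (rule has_H1_derivative_eq_integral[OF assms, symmetric])
qed auto

lemma square_integrable_imp_absolutely_integrable:
  fixes D :: "real \<Rightarrow> 'a::euclidean_space"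
  assumes "D integrable_on {a..b}" "(\<lambda>s. (norm (D s))\<^sup>2) integrable_on {a..b}"
  shows "D absolutely_integrable_on {a..b}"
proof (rule measurable_bounded_by_integrable_imp_absolutely_integrable)
  show "D \<in> borel_measurable (lebesgue_on {a..b})"
    using integrable_imp_measurable[OF assms(1)] measurable_on_iff_borel_measurable by blast
  show "(\<lambda>s. 1 + (norm (D s))\<^sup>2) integrable_on {a..b}"
    by (intro integrable_add assms(2) integrable_const_ivl)
  show "norm (D x) \<le> 1 + (norm (D x))\<^sup>2" for x
  proof -
    have "2 * norm (D x) \<le> 1 + (norm (D x))\<^sup>2" using sum_squares_bound[of 1 "norm (D x)"] by simp
    then show ?thesis using norm_ge_zero[of "D x"] by linarith
  qed
qed auto

lemma has_H1_derivative_unique: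
  assumes D1: "has_H1_derivative V D1 T" and D2: "has_H1_derivative V D2 T"
  shows "negligible {s\<in>{0..T}. D1 s \<noteq> D2 s}"
proof (cases "0 \<le> T")
  case True
  have "D absolutely_integrable_on {0..T}" if D: "has_H1_derivative V D T" for D
    using has_H1_derivative_integrable_on[OF D, of T] True D
    by (intro square_integrable_imp_absolutely_integrable) (auto simp: has_H1_derivative_def)
  then have "(\<lambda>s. D1 s - D2 s) absolutely_integrable_on {0..T}"
    using D1 D2 by (intro set_integral_diff(1))
  moreover have "((\<lambda>s. D1 s - D2 s) has_integral 0) {0..s}" if "s \<in> {0..T}" for s
    using has_integral_diff[of D1 "V s - V 0" _ D2 "V s - V 0"] D1 D2 that
    by (simp add: has_H1_derivative_def)
  ultimately have "negligible {s\<in>{0..T}. D1 s - D2 s \<noteq> 0}"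
    by (rule negligible_nonzero_if_integrals_from_left_eq_0_euclidean)
  then show ?thesis by simp
qed simp

lemma has_integral_rescale:
  fixes f :: "real \<Rightarrow> 'a::euclidean_space"
  assumes "(f has_integral I) {0..b}" "0 < t"
  shows "((\<lambda>s. f (s / t)) has_integral t *\<^sub>R I) {0..t * b}"
  using has_integral_affinity_iff[where m="1/t" and c=0 and f=f and I=I and a=0 and b=b] assms
  by (simp add: divide_inverse mult.commute)

lemma has_H1_derivative_phi:
  assumes "0 < t" "has_H1_derivative V D 1"
  shows "has_H1_derivative (phi t V) (\<lambda>s. (1 / t) *\<^sub>R D (s / t)) t"
  unfolding has_H1_derivative_def
proof safe
  fix s assume "s \<in> {0..t}"
  then have "(D has_integral V (s / t) - V 0) {0..s / t}"
    using assms by (auto simp: has_H1_derivative_def)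
  from has_integral_cmul[OF has_integral_rescale[OF this \<open>0 < t\<close>], of "1 / t"]
  show "((\<lambda>s. (1 / t) *\<^sub>R D (s / t)) has_integral phi t V s - phi t V 0) {0..s}"
    using assms(1) by (simp add: phi_def)
next
  have "((\<lambda>s. (norm (D s))\<^sup>2) has_integral integral {0..1} (\<lambda>s. (norm (D s))\<^sup>2)) {0..1}"
    using assms(2) by (auto simp: has_H1_derivative_def)
  from has_integral_rescale[OF this assms(1)]
  have "(\<lambda>s. (norm (D (s / t)))\<^sup>2) integrable_on {0..t}" by (auto simp: integrable_on_def)
  then have "(\<lambda>s. (1 / t)\<^sup>2 * (norm (D (s / t)))\<^sup>2) integrable_on {0..t}"
    using assms(1) by simp
  then show "(\<lambda>s. (norm ((1 / t) *\<^sub>R D (s / t)))\<^sup>2) integrable_on {0..t}"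
    using assms(1) by (simp add: power_divide)
qed

lemma has_H1_derivative_if_has_vector_derivative:
  assumes "\<And>x. x \<in> {0..T} \<Longrightarrow> (V has_vector_derivative V' x) (at x within {0..T})"
    and "continuous_on {0..T} V'"
  shows "has_H1_derivative V V' T"
  unfolding has_H1_derivative_def
proof safe
  fix s assume "s \<in> {0..T}"
  then show "(V' has_integral V s - V 0) {0..s}"
    by (intro fundamental_theorem_of_calculus) (auto intro!: has_vector_derivative_within_subset[OF assms(1)])
next
  show "(\<lambda>s. (norm (V' s))\<^sup>2) integrable_on {0..T}"
    by (intro integrable_continuous_real continuous_intros assms(2))
qed

lemma has_vector_derivative_piecewise_linear:
  fixes c1 c2 :: "'a::real_normed_vector"
  assumes "x \<noteq> a"
  shows "((\<lambda>u. min u a *\<^sub>R c1 + (u - min u a) *\<^sub>R c2) has_vector_derivative (if x \<le> a then c1 else c2)) (at x)"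
proof (cases "x < a")
  case True
  have "((\<lambda>u. u *\<^sub>R c1) has_vector_derivative c1) (at x)"
    by (auto intro!: derivative_eq_intros)
  then have "((\<lambda>u. min u a *\<^sub>R c1 + (u - min u a) *\<^sub>R c2) has_vector_derivative c1) (at x)"
    by (rule has_vector_derivative_transform_within_open[where S="{..<a}"]) (use True in auto)
  then show ?thesis using True by simp
next
  case False
  have "((\<lambda>u. a *\<^sub>R c1 + (u - a) *\<^sub>R c2) has_vector_derivative c2) (at x)"
    by (auto intro!: derivative_eq_intros)
  then have "((\<lambda>u. min u a *\<^sub>R c1 + (u - min u a) *\<^sub>R c2) has_vector_derivative c2) (at x)"
    by (rule has_vector_derivative_transform_within_open[where S="{a<..}"]) (use False assms in auto)
  then show ?thesis using False assms by simp
qed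

lemma has_integral_step_function:
  fixes c1 c2 :: "'a::euclidean_space"
  assumes "0 \<le> a" "0 \<le> s"
  shows "((\<lambda>u. if u \<le> a then c1 else c2) has_integral (min s a *\<^sub>R c1 + (s - min s a) *\<^sub>R c2)) {0..s}"
proof -
  let ?f = "\<lambda>u. min u a *\<^sub>R c1 + (u - min u a) *\<^sub>R c2"
  have "((\<lambda>u. if u \<le> a then c1 else c2) has_integral ?f s - ?f 0) {0..s}"
    using assms(2)
    by (intro fundamental_theorem_of_calculus_interior_strong[where S="{a}"]
        has_vector_derivative_piecewise_linear continuous_intros) auto
  then show ?thesis using assms(1) by simp
qed

definition tent :: "real \<Rightarrow> 'a::real_vector \<Rightarrow> real \<Rightarrow> 'a" where
  "tent a y u = (min u a - a * u) *\<^sub>R y"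

definition tent_deriv :: "real \<Rightarrow> 'a::real_vector \<Rightarrow> real \<Rightarrow> 'a" where
  "tent_deriv a y u = (if u \<le> a then (1 - a) *\<^sub>R y else - a *\<^sub>R y)"

lemma tent_piecewise_linear: "tent a y u = min u a *\<^sub>R ((1 - a) *\<^sub>R y) + (u - min u a) *\<^sub>R (- a *\<^sub>R y)"
  by (simp add: tent_def algebra_simps)

lemma has_vector_derivative_tent:
  "u \<noteq> a \<Longrightarrow> (tent a y has_vector_derivative tent_deriv a y u) (at u)"
  unfolding tent_piecewise_linear[abs_def] tent_deriv_def
  by (rule has_vector_derivative_piecewise_linear)

lemma has_H1_derivative_tent:
  fixes y :: "'a::euclidean_space"
  assumes "0 \<le> a"
  shows "has_H1_derivative (tent a y) (tent_deriv a y) T"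
  unfolding has_H1_derivative_def
proof safe
  fix s assume "s \<in> {0..T}"
  then have "(tent_deriv a y has_integral min s a *\<^sub>R ((1 - a) *\<^sub>R y) + (s - min s a) *\<^sub>R (- a *\<^sub>R y)) {0..s}"
    using has_integral_step_function[OF assms, of s "(1 - a) *\<^sub>R y" "- a *\<^sub>R y"]
    unfolding tent_deriv_def[abs_def] by simp
  moreover have "tent a y s - tent a y 0 = min s a *\<^sub>R ((1 - a) *\<^sub>R y) + (s - min s a) *\<^sub>R (- a *\<^sub>R y)"
    using assms by (simp add: tent_piecewise_linear)
  ultimately show "(tent_deriv a y has_integral tent a y s - tent a y 0) {0..s}" by simp
next
  have "(\<lambda>u. (norm (tent_deriv a y u))\<^sup>2) = (\<lambda>u. if u \<le> a then (norm ((1 - a) *\<^sub>R y))\<^sup>2 else (norm (a *\<^sub>R y))\<^sup>2)"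
    by (simp add: tent_deriv_def fun_eq_iff)
  moreover have "(\<lambda>u. if u \<le> a then (norm ((1 - a) *\<^sub>R y))\<^sup>2 else (norm (a *\<^sub>R y))\<^sup>2) integrable_on {0..T}"
  proof (cases "0 \<le> T")
    case True
    show ?thesis by (rule has_integral_integrable[OF has_integral_step_function[OF assms True]])
  qed (simp add: integrable_on_empty)
  ultimately show "(\<lambda>u. (norm (tent_deriv a y u))\<^sup>2) integrable_on {0..T}" by simp
qed

lemma tent_in_Hsp:
  assumes "subspace P" "0 \<le> a" "a \<le> 1"
  shows "tent a y \<in> Hsp P 1"
  using assms has_H1_derivative_tent[OF assms(2)]
  by (auto simp: Hsp_def H1_iff_has_H1_derivative tent_def subspace_0)

section \<open>The rescaled index form\<close>

lemma integrable_bilinear_square_integrable: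
  fixes g :: "'a::euclidean_space \<Rightarrow> 'b::euclidean_space \<Rightarrow> real"
    and f :: "real \<Rightarrow> 'a" and h :: "real \<Rightarrow> 'b"
  assumes g: "bilinear g"
    and f: "f integrable_on {a..b}" "(\<lambda>s. (norm (f s))\<^sup>2) integrable_on {a..b}"
    and h: "h integrable_on {a..b}" "(\<lambda>s. (norm (h s))\<^sup>2) integrable_on {a..b}"
  shows "(\<lambda>s. g (f s) (h s)) integrable_on {a..b}"
proof -
  obtain B where B: "B > 0" "\<And>x y. norm (g x y) \<le> B * norm x * norm y"
    using bilinear_bounded_pos[OF g] by blast
  have ivl: "{a..b} \<in> sets lebesgue" by (metis box_real(2) fmeasurableD lmeasurable_cbox)
  show ?thesis
  proof (rule measurable_bounded_by_integrable_imp_integrable[OF _ _ _ ivl])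
    show "(\<lambda>s. g (f s) (h s)) \<in> borel_measurable (lebesgue_on {a..b})"
      using integrable_imp_measurable[OF f(1)] integrable_imp_measurable[OF h(1)]
      by (rule borel_measurable_bilinear[OF g _ _ ivl])
    show "(\<lambda>s. B / 2 * ((norm (f s))\<^sup>2 + (norm (h s))\<^sup>2)) integrable_on {a..b}"
      by (intro integrable_on_mult_right integrable_add f(2) h(2))
    show "norm (g (f s) (h s)) \<le> B / 2 * ((norm (f s))\<^sup>2 + (norm (h s))\<^sup>2)" for s
    proof -
      have "norm (g (f s) (h s)) \<le> B / 2 * (2 * norm (f s) * norm (h s))"
        using B(2)[of "f s" "h s"] by simp
      also have "\<dots> \<le> B / 2 * ((norm (f s))\<^sup>2 + (norm (h s))\<^sup>2)"
        using B(1) by (intro mult_left_mono sum_squares_bound) simp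
      finally show ?thesis .
    qed
  qed
qed

lemma bilinear_matrix_vector_mult: "bilinear (\<lambda>(M::real^'n^'m) v. M *v v)"
  unfolding bilinear_def
proof safe
  fix M :: "real^'n^'m" show "linear ((*v) M)" by (rule matrix_vector_mul_linear)
next
  fix v :: "real^'n" show "linear (\<lambda>M::real^'n^'m. M *v v)"
    by (rule linearI) (simp_all add: matrix_vector_mult_add_rdistrib scaleR_matrix_vector_assoc)
qed

lemma continuous_on_compose_scale:
  fixes t :: real
  assumes "continuous_on {0..1} R" "0 \<le> t" "t \<le> 1"
  shows "continuous_on {0..1} (\<lambda>u. R (t * u))"
proof (rule continuous_on_compose2[OF assms(1)])
  show "continuous_on {0..1} (\<lambda>u. t * u)" by simp
  show "(\<lambda>u. t * u) ` {0..1} \<subseteq> {0..1}" using assms by (auto simp: mult_le_one)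
qed

lemma continuous_on_bilinear_potential:
  fixes g :: "real^'n \<Rightarrow> real^'n \<Rightarrow> real" and R :: "real \<Rightarrow> real^'n^'n"
  assumes "bilinear g" "continuous_on {0..1} R" "0 \<le> t" "t \<le> 1"
    and "continuous_on {0..1} V" "continuous_on {0..1} W"
  shows "continuous_on {0..1} (\<lambda>u. g (R (t * u) *v V u) (W u))"
  using bilinear_continuous_on_compose[OF continuous_on_compose_scale[OF assms(2-4)] assms(5)
      bilinear_matrix_vector_mult] assms(6)
  by (rule bilinear_continuous_on_compose[OF _ _ assms(1)])

text \<open>\<open>H1deriv\<close> is an arbitrary choice of weak derivative; by a.e. uniqueness
  the index form may be computed with any other one.\<close>

lemma Iform_eq_integral:
  assumes V: "has_H1_derivative V D T" and X: "has_H1_derivative X E T"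
  shows "Iform g R S T V X
    = integral {0..T} (\<lambda>s. g (D s) (E s) + g (R s *v V s) (X s)) - g (S (V 0)) (X 0)"
proof -
  let ?D = "H1deriv 0 T V" and ?E = "H1deriv 0 T X"
  have "negligible ({s\<in>{0..T}. ?D s \<noteq> D s} \<union> {s\<in>{0..T}. ?E s \<noteq> E s})"
    using has_H1_derivative_unique[OF has_H1_derivative_H1deriv[OF V] V]
      has_H1_derivative_unique[OF has_H1_derivative_H1deriv[OF X] X]
    by (rule negligible_Un)
  then have "integral {0..T} (\<lambda>s. g (?D s) (?E s) + g (R s *v V s) (X s))
      = integral {0..T} (\<lambda>s. g (D s) (E s) + g (R s *v V s) (X s))"
  proof (rule integral_spike)
    fix s assume "s \<in> {0..T} - ({s\<in>{0..T}. ?D s \<noteq> D s} \<union> {s\<in>{0..T}. ?E s \<noteq> E s})"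
    then have "?D s = D s" "?E s = E s" by auto
    then show "g (D s) (E s) + g (R s *v V s) (X s) = g (?D s) (?E s) + g (R s *v V s) (X s)" by simp
  qed
  then show ?thesis by (simp add: Iform_def)
qed

lemma Ihat_eq_integral:
  fixes g :: "real^'n \<Rightarrow> real^'n \<Rightarrow> real" and R :: "real \<Rightarrow> real^'n^'n"
  assumes g: "bilinear g" and t: "0 < t" "t \<le> 1" and R: "continuous_on {0..1} R"
    and V: "has_H1_derivative V D 1" and X: "has_H1_derivative X E 1"
  shows "Ihat g R S t V X
    = integral {0..1} (\<lambda>u. g (D u) (E u) / t + t * g (R (t * u) *v V u) (X u)) - g (S (V 0)) (X 0)"
proof -
  define k where "k u = g (D u) (E u) / t + t * g (R (t * u) *v V u) (X u)" for u
  have "(\<lambda>u. g (D u) (E u)) integrable_on {0..1}"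
    using V X has_H1_derivative_integrable_on[OF V, of 1] has_H1_derivative_integrable_on[OF X, of 1]
    by (intro integrable_bilinear_square_integrable[OF g]) (auto simp: has_H1_derivative_def)
  moreover have "(\<lambda>u. g (R (t * u) *v V u) (X u)) integrable_on {0..1}"
    using t by (intro integrable_continuous_real continuous_on_bilinear_potential[OF g R]
        has_H1_derivative_continuous_on[OF V] has_H1_derivative_continuous_on[OF X]) auto
  ultimately have k: "k integrable_on {0..1}"
    unfolding k_def by (intro integrable_add integrable_on_divide integrable_on_mult_right)
  have "((\<lambda>s. (1 / t) *\<^sub>R k (s / t)) has_integral integral {0..1} k) {0..t}"
    using has_integral_cmul[OF has_integral_rescale[OF integrable_integral[OF k] t(1)], of "1 / t"] t(1)
    by simp
  moreover have "(\<lambda>s. (1 / t) *\<^sub>R k (s / t))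
      = (\<lambda>s. g ((1 / t) *\<^sub>R D (s / t)) ((1 / t) *\<^sub>R E (s / t)) + g (R s *v phi t V s) (phi t X s))"
    using t(1) by (simp add: fun_eq_iff k_def phi_def bilinear_lmul[OF g] bilinear_rmul[OF g] field_simps)
  ultimately have "integral {0..t}
      (\<lambda>s. g ((1 / t) *\<^sub>R D (s / t)) ((1 / t) *\<^sub>R E (s / t)) + g (R s *v phi t V s) (phi t X s))
      = integral {0..1} k"
    by (metis integral_unique)
  then show ?thesis
    using Iform_eq_integral[OF has_H1_derivative_phi[OF t(1) V] has_H1_derivative_phi[OF t(1) X]]
    by (simp add: Ihat_def k_def[abs_def] phi_def)
qed

section \<open>The kernel consists of rescaled Jacobi fields\<close>

lemma integral_bilinear_tent_deriv:
  fixes g :: "'a::euclidean_space \<Rightarrow> 'b::euclidean_space \<Rightarrow> real"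
  assumes g: "bilinear g" and h: "h integrable_on {0..1}" and a: "a \<in> {0..1}"
  shows "integral {0..1} (\<lambda>u. g (h u) (tent_deriv a y u))
    = g (integral {0..a} h) y - a * g (integral {0..1} h) y"
proof -
  have lin: "bounded_linear (\<lambda>z. g z y)"
    using g by (simp add: bilinear_def linear_conv_bounded_linear)
  have int_g: "integral {0..s} (\<lambda>u. g (h u) y) = g (integral {0..s} h) y"
    and g_int: "(\<lambda>u. g (h u) y) integrable_on {0..s}" if "s \<in> {0..1}" for s
    using integral_linear[of h "{0..s}", OF _ lin] integrable_linear[of h "{0..s}", OF _ lin]
      integrable_subinterval_real[OF h, of 0 s] that
    by (auto simp: o_def)
  have ia: "{..a} \<inter> {0..1} = {0..a}" using a by auto
  have restr: "(\<lambda>u. if u \<in> {..a} then g (h u) y else 0) integrable_on {0..1}"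
    "integral {0..1} (\<lambda>u. if u \<in> {..a} then g (h u) y else 0) = integral {0..a} (\<lambda>u. g (h u) y)"
    using g_int[OF a] by (simp_all only: integrable_restrict_Int integral_restrict_Int ia)
  have "(\<lambda>u. g (h u) (tent_deriv a y u)) = (\<lambda>u. (if u \<in> {..a} then g (h u) y else 0) - a * g (h u) y)"
    by (auto simp: fun_eq_iff tent_deriv_def bilinear_rmul[OF g] bilinear_rneg[OF g] bilinear_rsub[OF g] algebra_simps)
  then show ?thesis
    using integral_diff[OF restr(1) integrable_on_mult_right[OF g_int, of 1 a]] restr(2) a
    by (simp add: int_g)
qed

lemma du_Bois_Reymond:
  fixes g :: "'a::euclidean_space \<Rightarrow> 'b::euclidean_space \<Rightarrow> real"
  assumes g: "bilinear g" and nondeg: "\<forall>x. (\<forall>y. g x y = 0) \<longrightarrow> x = 0"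
    and h: "h integrable_on {0..1}"
    and orth: "\<And>a y. a \<in> {0..1} \<Longrightarrow> integral {0..1} (\<lambda>u. g (h u) (tent_deriv a y u)) = 0"
    and a: "a \<in> {0..1}"
  shows "integral {0..a} h = a *\<^sub>R integral {0..1} h"
proof -
  have "g (integral {0..a} h - a *\<^sub>R integral {0..1} h) y = 0" for y
    using orth[OF a, of y] integral_bilinear_tent_deriv[OF g h a, of y]
    by (simp add: bilinear_lsub[OF g] bilinear_lmul[OF g])
  then have "integral {0..a} h - a *\<^sub>R integral {0..1} h = 0" using nondeg by blast
  then show ?thesis by simp
qed

lemma has_integral_bilinear_tent_by_parts:
  fixes g :: "'a::euclidean_space \<Rightarrow> 'b::euclidean_space \<Rightarrow> real"
  assumes g: "bilinear g" and a: "a \<in> {0..1}" and F: "continuous_on {0..1} F"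
    and F': "\<And>x. x \<in> {0<..<1} \<Longrightarrow> (F has_vector_derivative F' x) (at x)"
  shows "((\<lambda>u. g (F u) (tent_deriv a y u) + g (F' u) (tent a y u)) has_integral 0) {0..1}"
proof -
  have bb: "bounded_bilinear g" using g by (simp add: bilinear_conv_bounded_bilinear)
  have "((\<lambda>u. g (F u) (tent_deriv a y u) + g (F' u) (tent a y u))
      has_integral g (F 1) (tent a y 1) - g (F 0) (tent a y 0)) {0..1}"
  proof (rule fundamental_theorem_of_calculus_interior_strong[where S="{a}"])
    have "continuous_on {0..1} (tent a y)" unfolding tent_def by (intro continuous_intros)
    with F show "continuous_on {0..1} (\<lambda>u. g (F u) (tent a y u))"
      by (rule bilinear_continuous_on_compose[OF _ _ g])
    fix x assume "x \<in> {0<..<1} - {a}"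
    then show "((\<lambda>u. g (F u) (tent a y u)) has_vector_derivative
        g (F x) (tent_deriv a y x) + g (F' x) (tent a y x)) (at x)"
      by (intro bounded_bilinear.has_vector_derivative[OF bb] F' has_vector_derivative_tent) auto
  qed auto
  moreover have "tent a y 0 = 0" "tent a y 1 = 0" using a by (auto simp: tent_def)
  ultimately show ?thesis by (simp add: bilinear_rzero[OF g])
qed

lemma continuous_on_rescaled_Jacobi_operator:
  fixes R :: "real \<Rightarrow> real^'n^'n" and V :: "real \<Rightarrow> real^'n"
  assumes "continuous_on {0..1} R" "0 \<le> t" "t \<le> 1" "continuous_on {0..1} V"
  shows "continuous_on {0..1} (\<lambda>u. (t * t) *\<^sub>R (R (t * u) *v V u))"
  using bilinear_continuous_on_compose[OF continuous_on_compose_scale[OF assms(1-3)] assms(4)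
      bilinear_matrix_vector_mult]
  by (intro continuous_intros)

lemma kernel_orthogonal_to_tent_derivs:
  fixes g :: "real^'n \<Rightarrow> real^'n \<Rightarrow> real" and R :: "real \<Rightarrow> real^'n^'n"
  assumes g: "bilinear g" and t: "0 < t" "t \<le> 1" and R: "continuous_on {0..1} R"
    and P: "subspace P" and V: "has_H1_derivative V D 1"
    and ker: "\<And>X. X \<in> Hsp P 1 \<Longrightarrow> Ihat g R S t V X = 0"
    and F: "\<And>x. x \<in> {0..1} \<Longrightarrow> (F has_vector_derivative (t * t) *\<^sub>R (R (t * x) *v V x)) (at x within {0..1})"
    and a: "a \<in> {0..1}"
  shows "integral {0..1} (\<lambda>u. g (D u - F u) (tent_deriv a y u)) = 0"
proof -
  let ?Q = "\<lambda>u. (t * t) *\<^sub>R (R (t * u) *v V u)" and ?X = "tent a y" and ?X' = "tent_deriv a y"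
  have X: "has_H1_derivative ?X ?X' 1" using a by (intro has_H1_derivative_tent) simp
  have int_DX: "(\<lambda>u. g (D u) (?X' u)) integrable_on {0..1}"
    using V X has_H1_derivative_integrable_on[OF V, of 1] has_H1_derivative_integrable_on[OF X, of 1]
    by (intro integrable_bilinear_square_integrable[OF g]) (auto simp: has_H1_derivative_def)
  have int_QX: "(\<lambda>u. g (?Q u) (?X u)) integrable_on {0..1}"
    using t continuous_on_rescaled_Jacobi_operator[OF R _ _ has_H1_derivative_continuous_on[OF V]]
      has_H1_derivative_continuous_on[OF X]
    by (intro integrable_continuous_real bilinear_continuous_on_compose[OF _ _ g]) auto
  have "Ihat g R S t V ?X = 0" using a by (intro ker tent_in_Hsp P) auto
  moreover have "?X 0 = 0" using a by (simp add: tent_def)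
  moreover have "(\<lambda>u. g (D u) (?X' u) / t + t * g (R (t * u) *v V u) (?X u))
      = (\<lambda>u. (g (D u) (?X' u) + g (?Q u) (?X u)) / t)"
    using t(1) by (simp add: fun_eq_iff bilinear_lmul[OF g] field_simps)
  ultimately have "integral {0..1} (\<lambda>u. (g (D u) (?X' u) + g (?Q u) (?X u)) / t) = 0"
    using Ihat_eq_integral[OF g t R V X] by (simp add: bilinear_rzero[OF g])
  then have DX_QX: "integral {0..1} (\<lambda>u. g (D u) (?X' u)) + integral {0..1} (\<lambda>u. g (?Q u) (?X u)) = 0"
    using t(1) integral_add[OF int_DX int_QX] by simp
  have cF: "continuous_on {0..1} F" using F by (rule continuous_on_vector_derivative)
  have "((\<lambda>u. g (F u) (?X' u) + g (?Q u) (?X u)) has_integral 0) {0..1}"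
  proof (rule has_integral_bilinear_tent_by_parts[OF g a cF])
    fix x :: real assume "x \<in> {0<..<1}"
    then show "(F has_vector_derivative ?Q x) (at x)"
      using F[of x] by (simp add: at_within_interior[of x "{0..1}"])
  qed
  moreover have int_FX: "(\<lambda>u. g (F u) (?X' u)) integrable_on {0..1}"
    using integrable_diff[OF has_integral_integrable[OF calculation] int_QX] by simp
  ultimately have "integral {0..1} (\<lambda>u. g (F u) (?X' u)) + integral {0..1} (\<lambda>u. g (?Q u) (?X u)) = 0"
    using integral_add[OF int_FX int_QX] by (simp add: integral_unique)
  with DX_QX show ?thesis
    using integral_diff[OF int_DX int_FX] by (simp add: bilinear_lsub[OF g])
qed

lemma kernel_eq_integral_of_primitive:
  fixes g :: "real^'n \<Rightarrow> real^'n \<Rightarrow> real" and R :: "real \<Rightarrow> real^'n^'n"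
  assumes g: "bilinear g" and nondeg: "\<forall>x. (\<forall>y. g x y = 0) \<longrightarrow> x = 0"
    and t: "0 < t" "t \<le> 1" and R: "continuous_on {0..1} R"
    and P: "subspace P" and V: "has_H1_derivative V D 1"
    and ker: "\<And>X. X \<in> Hsp P 1 \<Longrightarrow> Ihat g R S t V X = 0"
    and F: "\<And>x. x \<in> {0..1} \<Longrightarrow> (F has_vector_derivative (t * t) *\<^sub>R (R (t * x) *v V x)) (at x within {0..1})"
  shows "\<exists>C. \<forall>s\<in>{0..1}. V s = V 0 + integral {0..s} (\<lambda>u. F u + C)"
proof -
  have cF: "continuous_on {0..1} F" using F by (rule continuous_on_vector_derivative)
  have int_F: "F integrable_on {0..s}" if "s \<in> {0..1}" for s
    using that by (intro integrable_continuous_real continuous_on_subset[OF cF]) auto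
  have int_DF: "(\<lambda>u. D u - F u) integrable_on {0..s}" if "s \<in> {0..1}" for s
    using has_H1_derivative_integrable_on[OF V that] int_F[OF that] by (rule integrable_diff)
  define C where "C = integral {0..1} (\<lambda>u. D u - F u)"
  have "V s = V 0 + integral {0..s} (\<lambda>u. F u + C)" if s: "s \<in> {0..1}" for s
  proof -
    have "integral {0..s} (\<lambda>u. D u - F u) = s *\<^sub>R C"
      unfolding C_def using int_DF[of 1] s
      by (intro du_Bois_Reymond[OF g nondeg] kernel_orthogonal_to_tent_derivs[OF g t R P V ker F]) auto
    moreover have "integral {0..s} D = integral {0..s} (\<lambda>u. D u - F u) + integral {0..s} F"
      using integral_diff[OF has_H1_derivative_integrable_on[OF V s] int_F[OF s]] by simp
    moreover have "integral {0..s} (\<lambda>u. F u + C) = s *\<^sub>R C + integral {0..s} F"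
      using integral_add[OF int_F[OF s] integrable_const_ivl[of C]] s by (simp add: add.commute)
    ultimately show ?thesis using has_H1_derivative_eq_integral[OF V s] by simp
  qed
  then show ?thesis by blast
qed

text \<open>\<open>phi t V\<close> solves the Jacobi equation \<open>J'' = R J\<close> on \<open>[0,t]\<close> iff
  \<open>V'' = t\<^sup>2 R(t u) V(u)\<close> on \<open>[0,1]\<close>.\<close>

definition rescaled_Jacobi_field ::
    "(real \<Rightarrow> real^'n^'n) \<Rightarrow> real \<Rightarrow> (real \<Rightarrow> real^'n) \<Rightarrow> (real \<Rightarrow> real^'n) \<Rightarrow> bool" where
  "rescaled_Jacobi_field R t V V' \<longleftrightarrow> (\<forall>x\<in>{0..1}.
     (V has_vector_derivative V' x) (at x within {0..1}) \<and>
     (V' has_vector_derivative (t * t) *\<^sub>R (R (t * x) *v V x)) (at x within {0..1}))"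

lemma Nker_imp_rescaled_Jacobi_field:
  fixes g :: "real^'n \<Rightarrow> real^'n \<Rightarrow> real" and R :: "real \<Rightarrow> real^'n^'n"
  assumes g: "bilinear g" and nondeg: "\<forall>x. (\<forall>y. g x y = 0) \<longrightarrow> x = 0"
    and t: "0 < t" "t \<le> 1" and R: "continuous_on {0..1} R" and P: "subspace P"
    and N: "V \<in> Nker g R P S t"
  shows "\<exists>V'. rescaled_Jacobi_field R t V V'"
proof -
  obtain D where V: "has_H1_derivative V D 1"
    using N by (auto simp: Nker_def Hsp_def H1_iff_has_H1_derivative)
  have ker: "\<And>X. X \<in> Hsp P 1 \<Longrightarrow> Ihat g R S t V X = 0" using N by (simp add: Nker_def)
  let ?Q = "\<lambda>u. (t * t) *\<^sub>R (R (t * u) *v V u)"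
  define F where "F u = integral {0..u} ?Q" for u
  have "continuous_on {0..1} ?Q"
    using t by (intro continuous_on_rescaled_Jacobi_operator[OF R] has_H1_derivative_continuous_on[OF V]) auto
  then have dF: "(F has_vector_derivative ?Q x) (at x within {0..1})" if "x \<in> {0..1}" for x
    unfolding F_def[abs_def] using that by (rule integral_has_vector_derivative)
  have cF: "continuous_on {0..1} F" using dF by (rule continuous_on_vector_derivative)
  obtain C where V_eq: "\<And>s. s \<in> {0..1} \<Longrightarrow> V s = V 0 + integral {0..s} (\<lambda>u. F u + C)"
    using kernel_eq_integral_of_primitive[OF g nondeg t R P V ker dF] by blast
  have "rescaled_Jacobi_field R t V (\<lambda>u. F u + C)"
    unfolding rescaled_Jacobi_field_def
  proof safe
    fix x :: real assume x: "x \<in> {0..1}"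
    have "((\<lambda>s. integral {0..s} (\<lambda>u. F u + C)) has_vector_derivative F x + C) (at x within {0..1})"
      using x by (intro integral_has_vector_derivative continuous_on_add cF continuous_on_const)
    from has_vector_derivative_add[OF has_vector_derivative_const this]
    have dV: "((\<lambda>s. V 0 + integral {0..s} (\<lambda>u. F u + C)) has_vector_derivative F x + C)
        (at x within {0..1})"
      by simp
    show "(V has_vector_derivative F x + C) (at x within {0..1})"
      by (rule has_vector_derivative_transform[OF x _ dV]) (rule V_eq)
    show "((\<lambda>u. F u + C) has_vector_derivative ?Q x) (at x within {0..1})"
      using has_vector_derivative_add[OF dF[OF x] has_vector_derivative_const] by simp
  qed
  then show ?thesis by blast
qed

section \<open>Differentiating the index form\<close>

lemma has_vector_derivative_compose_mult:
  assumes "(f has_vector_derivative f') (at (c * x) within T)" "(\<lambda>x. c * x) ` S \<subseteq> T"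
  shows "((\<lambda>x. f (c * x)) has_vector_derivative c *\<^sub>R f') (at x within S)"
proof -
  have "((\<lambda>x. c * x) has_real_derivative c) (at x within S)"
    by (auto intro!: derivative_eq_intros)
  then have "((\<lambda>x. c * x) has_vector_derivative c) (at x within S)"
    by (simp add: has_real_derivative_iff_has_vector_derivative)
  from vector_diff_chain_within[OF this has_vector_derivative_within_subset[OF assms]]
  show ?thesis by (simp add: o_def)
qed

lemma bounded_linear_bilinear_matrix_vector_mult:
  fixes g :: "real^'n \<Rightarrow> real^'n \<Rightarrow> real"
  assumes "bilinear g"
  shows "bounded_linear (\<lambda>M::real^'n^'n. g (M *v v) w)"
proof -
  have "linear (\<lambda>M::real^'n^'n. M *v v)" "linear (\<lambda>z. g z w)"
    using bilinear_matrix_vector_mult assms unfolding bilinear_def by blast+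
  from linear_compose[OF this] show ?thesis by (simp add: o_def linear_conv_bounded_linear)
qed

lemma has_field_derivative_rescaled_integrand:
  fixes g :: "real^'n \<Rightarrow> real^'n \<Rightarrow> real" and R R' :: "real \<Rightarrow> real^'n^'n"
  assumes g: "bilinear g"
    and dR: "\<And>s. s \<in> {0..1} \<Longrightarrow> (R has_vector_derivative R' s) (at s within {0..1})"
    and x: "x \<in> {0<..1}" and u: "u \<in> {0..1}"
  shows "((\<lambda>\<tau>. c / \<tau> + \<tau> * g (R (\<tau> * u) *v v) w) has_field_derivative
      - c / x\<^sup>2 + g (R (x * u) *v v) w + x * (u * g (R' (x * u) *v v) w)) (at x within {0<..1})"
proof -
  have "(R has_vector_derivative R' (u * x)) (at (u * x) within {0..1})"
    using x u by (intro dR) (auto simp: mult_le_one)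
  moreover have "(\<lambda>\<tau>. u * \<tau>) ` {0<..1} \<subseteq> {0..1}" using u by (auto simp: mult_le_one)
  ultimately have "((\<lambda>\<tau>. R (u * \<tau>)) has_vector_derivative u *\<^sub>R R' (u * x)) (at x within {0<..1})"
    by (rule has_vector_derivative_compose_mult)
  then have "((\<lambda>\<tau>. R (\<tau> * u)) has_vector_derivative u *\<^sub>R R' (x * u)) (at x within {0<..1})"
    by (simp add: mult.commute[of u])
  from bounded_linear.has_vector_derivative[OF bounded_linear_bilinear_matrix_vector_mult[OF g] this]
  have "((\<lambda>\<tau>. g (R (\<tau> * u) *v v) w) has_field_derivative u * g (R' (x * u) *v v) w) (at x within {0<..1})"
    by (simp add: has_real_derivative_iff_has_vector_derivative scaleR_matrix_vector_assoc[symmetric]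
        bilinear_lmul[OF g])
  then show ?thesis
    using x by (auto intro!: derivative_eq_intros simp: power2_eq_square field_simps)
qed

lemma continuous_on_rescaled_integrand_derivative:
  fixes g :: "real^'n \<Rightarrow> real^'n \<Rightarrow> real" and R R' :: "real \<Rightarrow> real^'n^'n"
    and V V' W W' :: "real \<Rightarrow> real^'n"
  assumes g: "bilinear g" and R: "continuous_on {0..1} R" and R': "continuous_on {0..1} R'"
    and V: "continuous_on {0..1} V" and W: "continuous_on {0..1} W"
    and V': "continuous_on {0..1} V'" and W': "continuous_on {0..1} W'"
  shows "continuous_on ({0<..1} \<times> {0..1}) (\<lambda>(x, u). - g (V' u) (W' u) / x\<^sup>2
    + g (R (x * u) *v V u) (W u) + x * (u * g (R' (x * u) *v V u) (W u)))"
proof -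
  let ?U = "{0<..1::real} \<times> {0..1::real}"
  have sub: "(\<lambda>p. fst p * snd p) ` ?U \<subseteq> {0..1}" "snd ` ?U \<subseteq> {0..1}"
    by (auto simp: mult_le_one)
  have cont_snd: "continuous_on ?U (\<lambda>p. X (snd p))" if "continuous_on {0..1} X" for X :: "real \<Rightarrow> real^'n"
    by (rule continuous_on_compose2[OF that _ sub(2)]) (intro continuous_intros)
  have cont_M: "continuous_on ?U (\<lambda>p. g (M (fst p * snd p) *v V (snd p)) (W (snd p)))"
    if "continuous_on {0..1} M" for M :: "real \<Rightarrow> real^'n^'n"
  proof -
    have "continuous_on ?U (\<lambda>p. M (fst p * snd p))"
      by (rule continuous_on_compose2[OF that _ sub(1)]) (intro continuous_intros)
    from bilinear_continuous_on_compose[OF this cont_snd[OF V] bilinear_matrix_vector_mult]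
    show ?thesis using cont_snd[OF W] by (rule bilinear_continuous_on_compose[OF _ _ g])
  qed
  have "continuous_on ?U (\<lambda>p. - g (V' (snd p)) (W' (snd p)) / (fst p)\<^sup>2
      + g (R (fst p * snd p) *v V (snd p)) (W (snd p)) + fst p * (snd p * g (R' (fst p * snd p) *v V (snd p)) (W (snd p))))"
    using bilinear_continuous_on_compose[OF cont_snd[OF V'] cont_snd[OF W'] g] cont_M[OF R] cont_M[OF R']
    by (intro continuous_intros) auto
  then show ?thesis by (simp add: case_prod_beta')
qed

lemma has_field_derivative_rescaled_index_integral:
  fixes g :: "real^'n \<Rightarrow> real^'n \<Rightarrow> real" and R R' :: "real \<Rightarrow> real^'n^'n"
    and V V' W W' :: "real \<Rightarrow> real^'n"
  assumes g: "bilinear g" and t: "t \<in> {0<..1}"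
    and dR: "\<And>s. s \<in> {0..1} \<Longrightarrow> (R has_vector_derivative R' s) (at s within {0..1})"
    and R: "continuous_on {0..1} R" and R': "continuous_on {0..1} R'"
    and V: "continuous_on {0..1} V" and W: "continuous_on {0..1} W"
    and V': "continuous_on {0..1} V'" and W': "continuous_on {0..1} W'"
  shows "((\<lambda>\<tau>. integral {0..1} (\<lambda>u. g (V' u) (W' u) / \<tau> + \<tau> * g (R (\<tau> * u) *v V u) (W u)))
      has_field_derivative integral {0..1} (\<lambda>u. - g (V' u) (W' u) / t\<^sup>2 + g (R (t * u) *v V u) (W u)
        + t * (u * g (R' (t * u) *v V u) (W u)))) (at t within {0<..1})"
proof -
  have "((\<lambda>\<tau>. integral (cbox 0 1) (\<lambda>u. g (V' u) (W' u) / \<tau> + \<tau> * g (R (\<tau> * u) *v V u) (W u)))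
      has_field_derivative integral (cbox 0 1) (\<lambda>u. - g (V' u) (W' u) / t\<^sup>2 + g (R (t * u) *v V u) (W u)
        + t * (u * g (R' (t * u) *v V u) (W u)))) (at t within {0<..1})"
  proof (rule leibniz_rule_field_derivative)
    fix x u :: real assume "x \<in> {0<..1}" "u \<in> cbox 0 1"
    then show "((\<lambda>\<tau>. g (V' u) (W' u) / \<tau> + \<tau> * g (R (\<tau> * u) *v V u) (W u)) has_field_derivative
        - g (V' u) (W' u) / x\<^sup>2 + g (R (x * u) *v V u) (W u) + x * (u * g (R' (x * u) *v V u) (W u)))
        (at x within {0<..1})"
      by (intro has_field_derivative_rescaled_integrand[OF g dR]) auto
  next
    fix x :: real assume "x \<in> {0<..1}"
    then have "continuous_on {0..1} (\<lambda>u. g (V' u) (W' u) / x + x * g (R (x * u) *v V u) (W u))"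
      using bilinear_continuous_on_compose[OF V' W' g] continuous_on_bilinear_potential[OF g R _ _ V W, of x]
      by (intro continuous_intros) auto
    then show "(\<lambda>u. g (V' u) (W' u) / x + x * g (R (x * u) *v V u) (W u)) integrable_on cbox 0 1"
      by (simp add: integrable_continuous_real)
  next
    show "continuous_on ({0<..1} \<times> cbox 0 1) (\<lambda>(x, u). - g (V' u) (W' u) / x\<^sup>2
        + g (R (x * u) *v V u) (W u) + x * (u * g (R' (x * u) *v V u) (W u)))"
      using continuous_on_rescaled_integrand_derivative[OF g R R' V W V' W'] by simp
  qed (use t in auto)
  then show ?thesis by simp
qed

lemma has_vector_derivative_rescaled_potential:
  fixes g :: "real^'n \<Rightarrow> real^'n \<Rightarrow> real" and R R' :: "real \<Rightarrow> real^'n^'n"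
  assumes g: "bilinear g" and t: "0 \<le> t" "t \<le> 1" and u: "u \<in> {0..1}"
    and dR: "\<And>s. s \<in> {0..1} \<Longrightarrow> (R has_vector_derivative R' s) (at s within {0..1})"
    and dV: "(V has_vector_derivative V' u) (at u within {0..1})"
    and dW: "(W has_vector_derivative W' u) (at u within {0..1})"
  shows "((\<lambda>u. g (R (t * u) *v V u) (W u)) has_vector_derivative
      g (R (t * u) *v V' u) (W u) + t * g (R' (t * u) *v V u) (W u) + g (R (t * u) *v V u) (W' u))
      (at u within {0..1})"
proof -
  have bb: "bounded_bilinear g" using g by (simp add: bilinear_conv_bounded_bilinear)
  have bbm: "bounded_bilinear (\<lambda>(M::real^'n^'n) v. M *v v)"
    using bilinear_matrix_vector_mult by (simp add: bilinear_conv_bounded_bilinear)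
  have "(R has_vector_derivative R' (t * u)) (at (t * u) within {0..1})"
    using t u by (intro dR) (auto simp: mult_le_one)
  moreover have "(\<lambda>u. t * u) ` {0..1} \<subseteq> {0..1}" using t by (auto simp: mult_le_one)
  ultimately have "((\<lambda>u. R (t * u)) has_vector_derivative t *\<^sub>R R' (t * u)) (at u within {0..1})"
    by (rule has_vector_derivative_compose_mult)
  from bounded_bilinear.has_vector_derivative[OF bb bounded_bilinear.has_vector_derivative[OF bbm this dV] dW]
  show ?thesis
    by (simp add: bilinear_ladd[OF g] bilinear_lmul[OF g] scaleR_matrix_vector_assoc[symmetric] algebra_simps)
qed

lemma has_vector_derivative_bilinear_rescaled_Jacobi_fields:
  fixes g :: "real^'n \<Rightarrow> real^'n \<Rightarrow> real" and R :: "real \<Rightarrow> real^'n^'n"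
  assumes g: "bilinear g" and t: "0 \<le> t" "t \<le> 1" and u: "u \<in> {0..1}"
    and R_sym: "\<And>s x y. s \<in> {0..1} \<Longrightarrow> g (R s *v x) y = g x (R s *v y)"
    and V: "rescaled_Jacobi_field R t V V'" and W: "rescaled_Jacobi_field R t W W'"
  shows "((\<lambda>u. g (V' u) (W' u)) has_vector_derivative
      (t * t) * (g (R (t * u) *v V' u) (W u) + g (R (t * u) *v V u) (W' u))) (at u within {0..1})"
proof -
  have bb: "bounded_bilinear g" using g by (simp add: bilinear_conv_bounded_bilinear)
  have tu: "t * u \<in> {0..1}" using t u by (auto simp: mult_le_one)
  have "((\<lambda>u. g (V' u) (W' u)) has_vector_derivative
      g (V' u) ((t * t) *\<^sub>R (R (t * u) *v W u)) + g ((t * t) *\<^sub>R (R (t * u) *v V u)) (W' u))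
      (at u within {0..1})"
    using V W u by (intro bounded_bilinear.has_vector_derivative[OF bb]) (auto simp: rescaled_Jacobi_field_def)
  then show ?thesis
    by (simp add: bilinear_rmul[OF g] bilinear_lmul[OF g] R_sym[OF tu] algebra_simps)
qed

text \<open>The \<open>t\<close>-derivative of the rescaled integrand is an exact \<open>u\<close>-derivative: by the symmetry
  of \<open>R\<close>, the Jacobi equation makes the \<open>R\<close>-terms of the two products cancel.\<close>

lemma has_vector_derivative_rescaled_index_primitive:
  fixes g :: "real^'n \<Rightarrow> real^'n \<Rightarrow> real" and R R' :: "real \<Rightarrow> real^'n^'n"
  assumes g: "bilinear g" and t: "0 < t" "t \<le> 1" and u: "u \<in> {0..1}"
    and R_sym: "\<And>s x y. s \<in> {0..1} \<Longrightarrow> g (R s *v x) y = g x (R s *v y)"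
    and dR: "\<And>s. s \<in> {0..1} \<Longrightarrow> (R has_vector_derivative R' s) (at s within {0..1})"
    and V: "rescaled_Jacobi_field R t V V'" and W: "rescaled_Jacobi_field R t W W'"
  shows "((\<lambda>u. u * g (R (t * u) *v V u) (W u) - u * g (V' u) (W' u) / t\<^sup>2) has_vector_derivative
      - g (V' u) (W' u) / t\<^sup>2 + g (R (t * u) *v V u) (W u) + t * (u * g (R' (t * u) *v V u) (W u)))
      (at u within {0..1})"
proof -
  let ?A' = "g (R (t * u) *v V' u) (W u) + t * g (R' (t * u) *v V u) (W u) + g (R (t * u) *v V u) (W' u)"
    and ?B' = "(t * t) * (g (R (t * u) *v V' u) (W u) + g (R (t * u) *v V u) (W' u))"
  have "((\<lambda>u. g (R (t * u) *v V u) (W u)) has_vector_derivative ?A') (at u within {0..1})"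
    using V W u t
    by (intro has_vector_derivative_rescaled_potential[OF g _ _ u dR]) (auto simp: rescaled_Jacobi_field_def)
  from bounded_bilinear.has_vector_derivative[OF bounded_bilinear_mult has_vector_derivative_id this]
  have dA: "((\<lambda>u. u * g (R (t * u) *v V u) (W u)) has_vector_derivative u * ?A' + g (R (t * u) *v V u) (W u))
      (at u within {0..1})"
    by simp
  from bounded_bilinear.has_vector_derivative[OF bounded_bilinear_mult has_vector_derivative_id
      has_vector_derivative_bilinear_rescaled_Jacobi_fields[OF g _ _ u R_sym V W]]
  have "((\<lambda>u. u * g (V' u) (W' u)) has_vector_derivative u * ?B' + g (V' u) (W' u)) (at u within {0..1})"
    using t by simp
  then have dB: "((\<lambda>u. u * g (V' u) (W' u) / t\<^sup>2) has_vector_derivative (u * ?B' + g (V' u) (W' u)) / t\<^sup>2)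
      (at u within {0..1})"
    unfolding has_real_derivative_iff_has_vector_derivative[symmetric] by (rule DERIV_cdivide)
  from has_vector_derivative_diff[OF dA dB] show ?thesis
    by (rule has_vector_derivative_eq_rhs) (use t in \<open>simp add: field_simps power2_eq_square\<close>)
qed

lemma has_integral_rescaled_index_derivative:
  fixes g :: "real^'n \<Rightarrow> real^'n \<Rightarrow> real" and R R' :: "real \<Rightarrow> real^'n^'n"
  assumes g: "bilinear g" and t: "0 < t" "t \<le> 1"
    and R_sym: "\<And>s x y. s \<in> {0..1} \<Longrightarrow> g (R s *v x) y = g x (R s *v y)"
    and dR: "\<And>s. s \<in> {0..1} \<Longrightarrow> (R has_vector_derivative R' s) (at s within {0..1})"
    and V: "rescaled_Jacobi_field R t V V'" and W: "rescaled_Jacobi_field R t W W'" and W1: "W 1 = 0"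
  shows "((\<lambda>u. - g (V' u) (W' u) / t\<^sup>2 + g (R (t * u) *v V u) (W u) + t * (u * g (R' (t * u) *v V u) (W u)))
      has_integral - g (V' 1) (W' 1) / t\<^sup>2) {0..1}"
  using fundamental_theorem_of_calculus[OF zero_le_one
      has_vector_derivative_rescaled_index_primitive[OF g t _ R_sym dR V W]] W1
  by (simp add: bilinear_rzero[OF g])

lemma rescaled_Jacobi_field_continuous_on_deriv:
  "rescaled_Jacobi_field R t V V' \<Longrightarrow> continuous_on {0..1} V'"
  unfolding rescaled_Jacobi_field_def by (rule continuous_on_vector_derivative) blast

lemma rescaled_Jacobi_field_has_H1_derivative:
  assumes "rescaled_Jacobi_field R t V V'"
  shows "has_H1_derivative V V' 1"
  using assms rescaled_Jacobi_field_continuous_on_deriv[OF assms]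
  by (intro has_H1_derivative_if_has_vector_derivative) (auto simp: rescaled_Jacobi_field_def)

lemma Ihat_has_real_derivative:
  fixes g :: "real^'n \<Rightarrow> real^'n \<Rightarrow> real" and R R' :: "real \<Rightarrow> real^'n^'n"
  assumes g: "bilinear g" and t: "t \<in> {0<..1}"
    and R_sym: "\<And>s x y. s \<in> {0..1} \<Longrightarrow> g (R s *v x) y = g x (R s *v y)"
    and dR: "\<And>s. s \<in> {0..1} \<Longrightarrow> (R has_vector_derivative R' s) (at s within {0..1})"
    and R': "continuous_on {0..1} R'"
    and V: "rescaled_Jacobi_field R t V V'" and W: "rescaled_Jacobi_field R t W W'" and W1: "W 1 = 0"
  shows "((\<lambda>\<tau>. Ihat g R S \<tau> V W) has_real_derivative - g (V' 1) (W' 1) / t\<^sup>2) (at t within {0<..1})"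
proof -
  have R: "continuous_on {0..1} R" using dR by (rule continuous_on_vector_derivative)
  note H1 = rescaled_Jacobi_field_has_H1_derivative[OF V] rescaled_Jacobi_field_has_H1_derivative[OF W]
  let ?I = "\<lambda>\<tau>. integral {0..1} (\<lambda>u. g (V' u) (W' u) / \<tau> + \<tau> * g (R (\<tau> * u) *v V u) (W u))"
  have "(?I has_field_derivative - g (V' 1) (W' 1) / t\<^sup>2) (at t within {0<..1})"
    using has_field_derivative_rescaled_index_integral[OF g t dR R R'
        has_H1_derivative_continuous_on[OF H1(1)] has_H1_derivative_continuous_on[OF H1(2)]
        rescaled_Jacobi_field_continuous_on_deriv[OF V] rescaled_Jacobi_field_continuous_on_deriv[OF W]]
      integral_unique[OF has_integral_rescaled_index_derivative[OF g _ _ R_sym dR V W W1]] t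
    by simp
  from DERIV_diff[OF this DERIV_const[of "g (S (V 0)) (W 0)"]]
  have "((\<lambda>\<tau>. ?I \<tau> - g (S (V 0)) (W 0)) has_real_derivative - g (V' 1) (W' 1) / t\<^sup>2) (at t within {0<..1})"
    by simp
  then show ?thesis
  proof (rule has_field_derivative_transform_within[OF _ zero_less_one t])
    fix \<tau> :: real assume "\<tau> \<in> {0<..1}" "dist \<tau> t < 1"
    then show "?I \<tau> - g (S (V 0)) (W 0) = Ihat g R S \<tau> V W"
      using Ihat_eq_integral[OF g _ _ R H1] by simp
  qed
qed

lemma vector_derivative_phi:
  fixes X :: "real \<Rightarrow> 'a::euclidean_space"
  assumes t: "0 < t" and dX: "(X has_vector_derivative X') (at 1 within {0..1})"
  shows "vector_derivative (phi t X) (at t within {0..t}) = (1 / t) *\<^sub>R X'"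
proof -
  have "((\<lambda>s. s / t) has_real_derivative 1 / t) (at t within {0..t})"
    using t by (auto intro!: derivative_eq_intros)
  then have "((\<lambda>s. s / t) has_vector_derivative 1 / t) (at t within {0..t})"
    by (simp add: has_real_derivative_iff_has_vector_derivative)
  moreover have "(X has_vector_derivative X') (at 1 within (\<lambda>s. s / t) ` {0..t})"
    using t by (intro has_vector_derivative_within_subset[OF dX]) (auto simp: field_simps)
  then have "(X has_vector_derivative X') (at ((\<lambda>s. s / t) t) within (\<lambda>s. s / t) ` {0..t})"
    using t by simp
  ultimately have "(phi t X has_vector_derivative (1 / t) *\<^sub>R X') (at t within {0..t})"
    using vector_diff_chain_within by (fastforce simp: phi_def o_def)
  then show ?thesis
    by (rule vector_derivative_within_closed_interval[rotated 2]) (use t in auto)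
qed

theorem proposition3p5:
  fixes g :: "real^'n \<Rightarrow> real^'n \<Rightarrow> real"
    and R :: "real \<Rightarrow> real^'n^'n"
    and P :: "(real^'n) set"
    and S :: "real^'n \<Rightarrow> real^'n"
  assumes g_bil: "bilinear g"
    and g_sym: "\<forall>x y. g x y = g y x"
    and g_nondeg: "\<forall>x. (\<forall>y. g x y = 0) \<longrightarrow> x = 0"
    and R_C1: "\<exists>R'. (\<forall>s\<in>{0..1}. (R has_vector_derivative R' s) (at s within {0..1}))
                    \<and> continuous_on {0..1} R'"
    and R_sym: "\<forall>s\<in>{0..1}. \<forall>x y. g (R s *v x) y = g x (R s *v y)"
    and P_sub: "subspace P"
    and g_nondeg_P: "\<forall>x\<in>P. (\<forall>y\<in>P. g x y = 0) \<longrightarrow> x = 0"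
    and S_lin: "linear S"
    and S_P: "S ` P \<subseteq> P"
    and S_sym: "\<forall>x\<in>P. \<forall>y\<in>P. g (S x) y = g x (S y)"
  shows "\<forall>t\<in>{0<..1}. \<forall>V\<in>Nker g R P S t. \<forall>W\<in>Nker g R P S t.
           ((\<lambda>\<tau>. Ihat g R S \<tau> V W) has_real_derivative
              (- g (vector_derivative (phi t V) (at t within {0..t}))
                   (vector_derivative (phi t W) (at t within {0..t}))))
           (at t within {0<..1})"
proof (intro ballI)
  txt \<open>The term \<open>g (S (V 0)) (W 0)\<close> does not depend on \<open>t\<close>.\<close>
  fix t V W assume t: "t \<in> {0<..1}" and V: "V \<in> Nker g R P S t" and W: "W \<in> Nker g R P S t"
  obtain R' where dR: "\<And>s. s \<in> {0..1} \<Longrightarrow> (R has_vector_derivative R' s) (at s within {0..1})"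
    and R': "continuous_on {0..1} R'" using R_C1 by blast
  have R: "continuous_on {0..1} R" using dR by (rule continuous_on_vector_derivative)
  have t01: "0 < t" "t \<le> 1" using t by auto
  obtain V' where V': "rescaled_Jacobi_field R t V V'"
    using Nker_imp_rescaled_Jacobi_field[OF g_bil g_nondeg t01 R P_sub V] by blast
  obtain W' where W': "rescaled_Jacobi_field R t W W'"
    using Nker_imp_rescaled_Jacobi_field[OF g_bil g_nondeg t01 R P_sub W] by blast
  have "W 1 = 0" using W by (simp add: Nker_def Hsp_def)
  with V' W' have "((\<lambda>\<tau>. Ihat g R S \<tau> V W) has_real_derivative - g (V' 1) (W' 1) / t\<^sup>2) (at t within {0<..1})"
    using R_sym by (intro Ihat_has_real_derivative[OF g_bil t _ dR R']) auto
  moreover have "vector_derivative (phi t V) (at t within {0..t}) = (1 / t) *\<^sub>R V' 1"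
    and "vector_derivative (phi t W) (at t within {0..t}) = (1 / t) *\<^sub>R W' 1"
    using t01 V' W' by (auto intro!: vector_derivative_phi simp: rescaled_Jacobi_field_def)
  ultimately show "((\<lambda>\<tau>. Ihat g R S \<tau> V W) has_real_derivative
      (- g (vector_derivative (phi t V) (at t within {0..t})) (vector_derivative (phi t W) (at t within {0..t}))))
      (at t within {0<..1})"
    by (simp add: bilinear_lmul[OF g_bil] bilinear_rmul[OF g_bil] power2_eq_square)
qed

end
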